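(* Let $L$ be an $R_0$-algebra. Let $\{F_t\mid t\in\Lambda\}$, where $\Lambda\subseteq(0,0.5]$, be a collection of fated filters of $L$ such that (i) $L=\bigcup_{t\in\Lambda}F_t$, and (ii) for all $s,t\in\Lambda$, $s<t$ if and only if $F_t\subset F_s$. Then the fuzzy subset $\mu$ of $L$ defined by $\mu(x)=\sup\{t\in\Lambda\mid x\in F_t\}$ for all $x\in L$ is an $(\in,\in\vee q)$-fuzzy fated filter of $L$.
   Context: An $R_0$-algebra is a bounded distributive lattice $(L,\wedge,\vee,0,1)$ with an order-reversing involution $\neg$ and a binary operation $\to$ such that for all $x,y,z\in L$: $x\to y=\neg y\to\neg x$; $1\to x=x$; $(y\to z)\wedge((x\to y)\to(x\to z))=y\to z$; $x\to(y\to z)=y\to(x\to z)$; $x\to(y\vee z)=(x\to y)\vee(x\to z)$; $(x\to y)\vee((x\to y)\to(\neg x\vee y))=1$. A fated filter of $L$ is a nonempty subset $A\subseteq L$ with $1\in A$ such that for all $x,y\in L$ and $a\in A$, $a\to((x\to y)\to x)\in A$ implies $x\in A$. For $x\in L$, $t\in(0,1]$ and a fuzzy subset $\mu:L\to[0,1]$: $x_t\in\mu$ iff $\mu(x)\ge t$; $x_t\,q\,\mu$ iff $\mu(x)+t>1$; $x_t\in\vee q\,\mu$ iff $x_t\in\mu$ or $x_t\,q\,\mu$. $\mu$ is an $(\in,\in\vee q)$-fuzzy fated filter of $L$ if (1) for all $x\in L$, $t\in(0,1]$: $x_t\in\mu\Rightarrow 1_t\in\vee q\,\mu$; and (2) for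 all $x,a,y\in L$, $t,s\in(0,1]$: if $(a\to((x\to y)\to x))_t\in\mu$ and $a_s\in\mu$ then $x_{\min\{t,s\}}\in\vee q\,\mu$. *)

theory Defs
  imports Main Complex_Main
begin

text \<open>An R0-algebra on the whole type 'a: the lattice structure (with bottom 0 and top 1)
  is the type's bounded distributive lattice structure; neg and imp are the extra operations.\<close>

definition R0_algebra :: "('a::{distrib_lattice,bounded_lattice} \<Rightarrow> 'a) \<Rightarrow> ('a \<Rightarrow> 'a \<Rightarrow> 'a) \<Rightarrow> bool" where
  "R0_algebra neg imp \<longleftrightarrow>
     (\<forall>x. neg (neg x) = x) \<and>
     (\<forall>x y. x \<le> y \<longrightarrow> neg y \<le> neg x) \<and>
     (\<forall>x y. imp x y = imp (neg y) (neg x)) \<and>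
     (\<forall>x. imp top x = x) \<and>
     (\<forall>x y z. inf (imp y z) (imp (imp x y) (imp x z)) = imp y z) \<and>
     (\<forall>x y z. imp x (imp y z) = imp y (imp x z)) \<and>
     (\<forall>x y z. imp x (sup y z) = sup (imp x y) (imp x z)) \<and>
     (\<forall>x y. sup (imp x y) (imp (imp x y) (sup (neg x) y)) = top)"

definition fated_filter :: "('a::{distrib_lattice,bounded_lattice} \<Rightarrow> 'a \<Rightarrow> 'a) \<Rightarrow> 'a set \<Rightarrow> bool" where
  "fated_filter imp A \<longleftrightarrow> A \<noteq> {} \<and> top \<in> A \<and>
     (\<forall>x y a. a \<in> A \<longrightarrow> imp a (imp (imp x y) x) \<in> A \<longrightarrow> x \<in> A)"

definition fz_in :: "'a \<Rightarrow> real \<Rightarrow> ('a \<Rightarrow> real) \<Rightarrow> bool" where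
  "fz_in x t \<mu> \<longleftrightarrow> \<mu> x \<ge> t"

definition fz_q :: "'a \<Rightarrow> real \<Rightarrow> ('a \<Rightarrow> real) \<Rightarrow> bool" where
  "fz_q x t \<mu> \<longleftrightarrow> \<mu> x + t > 1"

definition fz_in_or_q :: "'a \<Rightarrow> real \<Rightarrow> ('a \<Rightarrow> real) \<Rightarrow> bool" where
  "fz_in_or_q x t \<mu> \<longleftrightarrow> fz_in x t \<mu> \<or> fz_q x t \<mu>"

definition in_inq_fuzzy_fated_filter ::
  "('a::{distrib_lattice,bounded_lattice} \<Rightarrow> 'a \<Rightarrow> 'a) \<Rightarrow> ('a \<Rightarrow> real) \<Rightarrow> bool" where
  "in_inq_fuzzy_fated_filter imp \<mu> \<longleftrightarrow>
     (\<forall>x. 0 \<le> \<mu> x \<and> \<mu> x \<le> 1) \<and>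
     (\<forall>x t. t \<in> {0<..1} \<longrightarrow> fz_in x t \<mu> \<longrightarrow> fz_in_or_q top t \<mu>) \<and>
     (\<forall>x a y t s. t \<in> {0<..1} \<longrightarrow> s \<in> {0<..1} \<longrightarrow>
        fz_in (imp a (imp (imp x y) x)) t \<mu> \<longrightarrow> fz_in a s \<mu> \<longrightarrow>
        fz_in_or_q x (min t s) \<mu>)"

end

theory Submission
  imports Defs
begin

text \<open>For nested fated filters the two filters containing \<open>a \<rightarrow> ((x \<rightarrow> y) \<rightarrow> x)\<close> and \<open>a\<close>
  both contain the smaller of them, which then contains \<open>x\<close>; passing to suprema gives
  \<open>min (\<mu> (a \<rightarrow> ((x \<rightarrow> y) \<rightarrow> x))) (\<mu> a) \<le> \<mu> x\<close> and \<open>\<mu> x \<le> \<mu> 1\<close>.\<close>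

locale nested_level_sets =
  fixes \<Lambda> :: "real set" and F :: "real \<Rightarrow> 'a set"
  assumes covers: "(\<Union>t\<in>\<Lambda>. F t) = UNIV"
    and bdd: "bdd_above \<Lambda>"
    and antitone: "\<And>s t. s \<in> \<Lambda> \<Longrightarrow> t \<in> \<Lambda> \<Longrightarrow> s \<le> t \<Longrightarrow> F t \<subseteq> F s"
begin

definition level_sup :: "'a \<Rightarrow> real" where
  "level_sup x = Sup {t \<in> \<Lambda>. x \<in> F t}"

lemma levels_nonempty: "{t \<in> \<Lambda>. x \<in> F t} \<noteq> {}"
  using covers by blast

lemma levels_bdd_above: "bdd_above {t \<in> \<Lambda>. x \<in> F t}"
  using bdd by (rule bdd_above_mono) auto

lemma level_sup_upper: "t \<in> \<Lambda> \<Longrightarrow> x \<in> F t \<Longrightarrow> t \<le> level_sup x"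
  unfolding level_sup_def by (rule cSup_upper) (auto intro: levels_bdd_above)

lemma level_sup_least: "(\<And>t. t \<in> \<Lambda> \<Longrightarrow> x \<in> F t \<Longrightarrow> t \<le> c) \<Longrightarrow> level_sup x \<le> c"
  unfolding level_sup_def using levels_nonempty by (rule cSup_least) auto

lemma less_level_sup_iff: "c < level_sup x \<longleftrightarrow> (\<exists>t\<in>\<Lambda>. x \<in> F t \<and> c < t)"
  unfolding level_sup_def by (auto simp: less_cSup_iff[OF levels_nonempty levels_bdd_above])

lemma level_sup_in_interval:
  assumes "\<Lambda> \<subseteq> {a..b}"
  shows "level_sup x \<in> {a..b}"
proof -
  obtain t where "t \<in> \<Lambda>" "x \<in> F t"
    using levels_nonempty by blast
  then have "a \<le> level_sup x"
    using assms level_sup_upper[of t x] by force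
  moreover have "level_sup x \<le> b"
    using assms by (intro level_sup_least) auto
  ultimately show ?thesis
    by simp
qed

lemma level_sup_mono:
  assumes "\<And>t. t \<in> \<Lambda> \<Longrightarrow> x \<in> F t \<Longrightarrow> y \<in> F t"
  shows "level_sup x \<le> level_sup y"
  using assms by (intro level_sup_least level_sup_upper)

lemma min_level_sup_le:
  assumes closed: "\<And>t. t \<in> \<Lambda> \<Longrightarrow> a \<in> F t \<Longrightarrow> b \<in> F t \<Longrightarrow> x \<in> F t"
  shows "min (level_sup a) (level_sup b) \<le> level_sup x"
proof (rule ccontr)
  assume "\<not> ?thesis"
  then have "level_sup x < level_sup a" "level_sup x < level_sup b"
    by auto
  then obtain r s where r: "r \<in> \<Lambda>" "a \<in> F r" "level_sup x < r"
    and s: "s \<in> \<Lambda>" "b \<in> F s" "level_sup x < s"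
    by (auto simp: less_level_sup_iff)
  have "min r s \<in> \<Lambda>"
    using r s by (simp add: min_def)
  moreover have "a \<in> F (min r s)" "b \<in> F (min r s)"
    using antitone[OF \<open>min r s \<in> \<Lambda>\<close>] r s by (auto simp: subset_iff)
  ultimately have "min r s \<le> level_sup x"
    by (intro level_sup_upper closed)
  with r s show False
    by linarith
qed

end

lemma subset_if_psubset_iff_less:
  fixes F :: "'b::linorder \<Rightarrow> 'a set"
  assumes "\<forall>s\<in>\<Lambda>. \<forall>t\<in>\<Lambda>. s < t \<longleftrightarrow> F t \<subset> F s"
    and "s \<in> \<Lambda>" "t \<in> \<Lambda>" "s \<le> t"
  shows "F t \<subseteq> F s"
proof (cases "s = t")
  case False
  with assms(4) have "s < t"
    by simp
  then have "F t \<subset> F s"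
    using assms(1-3) by blast
  then show ?thesis
    by (rule psubset_imp_subset)
qed simp

lemma fated_filter_top: "fated_filter imp A \<Longrightarrow> top \<in> A"
  unfolding fated_filter_def by blast

lemma fated_filterD:
  "fated_filter imp A \<Longrightarrow> a \<in> A \<Longrightarrow> imp a (imp (imp x y) x) \<in> A \<Longrightarrow> x \<in> A"
  unfolding fated_filter_def by blast

lemma in_inq_fuzzy_fated_filterI:
  assumes "\<And>x. 0 \<le> \<mu> x \<and> \<mu> x \<le> 1"
    and "\<And>x. \<mu> x \<le> \<mu> top"
    and "\<And>x a y. min (\<mu> (imp a (imp (imp x y) x))) (\<mu> a) \<le> \<mu> x"
  shows "in_inq_fuzzy_fated_filter imp \<mu>"
  unfolding in_inq_fuzzy_fated_filter_def fz_in_or_q_def fz_in_def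
proof (intro conjI allI impI disjI1)
  show "0 \<le> \<mu> x" "\<mu> x \<le> 1" for x
    using assms(1) by auto
  show "t \<le> \<mu> top" if "t \<le> \<mu> x" for x t
    using that assms(2) order_trans by blast
  show "min t s \<le> \<mu> x"
    if "t \<le> \<mu> (imp a (imp (imp x y) x))" "s \<le> \<mu> a" for x a y t s
    using that assms(3)[of a x y] by linarith
qed

theorem corollary3p29:
  fixes neg :: "'a::{distrib_lattice,bounded_lattice} \<Rightarrow> 'a"
    and imp :: "'a \<Rightarrow> 'a \<Rightarrow> 'a"
    and \<Lambda> :: "real set"
    and F :: "real \<Rightarrow> 'a set"
    and \<mu> :: "'a \<Rightarrow> real"
  assumes "R0_algebra neg imp"
    and "\<Lambda> \<subseteq> {0<..1/2}"
    and "\<forall>t\<in>\<Lambda>. fated_filter imp (F t)"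
    and "UNIV = (\<Union>t\<in>\<Lambda>. F t)"
    and "\<forall>s\<in>\<Lambda>. \<forall>t\<in>\<Lambda>. s < t \<longleftrightarrow> F t \<subset> F s"
    and "\<forall>x. \<mu> x = Sup {t \<in> \<Lambda>. x \<in> F t}"
  shows "in_inq_fuzzy_fated_filter imp \<mu>"
proof -
  interpret nested_level_sets \<Lambda> F
  proof
    show "bdd_above \<Lambda>"
      using assms(2) by (intro bdd_aboveI[of _ "1/2"]) auto
  qed (use assms(4) subset_if_psubset_iff_less[OF assms(5)] in auto)
  have \<mu>: "\<mu> = level_sup"
    using assms(6) by (auto simp: level_sup_def)
  have filter: "fated_filter imp (F t)" if "t \<in> \<Lambda>" for t
    using assms(3) that by blast
  show ?thesis
    unfolding \<mu>
  proof (rule in_inq_fuzzy_fated_filterI)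
    show "0 \<le> level_sup x \<and> level_sup x \<le> 1" for x
      using level_sup_in_interval[of 0 1 x] assms(2) by force
    show "level_sup x \<le> level_sup top" for x
      by (rule level_sup_mono) (rule fated_filter_top[OF filter])
    show "min (level_sup (imp a (imp (imp x y) x))) (level_sup a) \<le> level_sup x" for x a y
      by (rule min_level_sup_le) (rule fated_filterD[OF filter])
  qed
qed

end
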